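(* Let $G$ be a graph on $n$ vertices belonging to $\mathcal{H}_7^{+}$, and let $\alpha$ be its corner rank. Then (i) $G^{(\alpha-3)}$ is (isomorphic to) $H_7$; (ii) $G$ is of type 1; (iii) the capture time of $G$ is $n-4$.
   Context: All graphs are finite, nonempty, and reflexive (every vertex has a loop). $N[v]$ is the closed neighborhood of $v$ (including $v$). For distinct $v,w$, $w$ strictly corners $v$ if $N[v]\subsetneq N[w]$; $v$ is then a strict corner. A vertex dominates a set if adjacent to all its vertices. Corner ranking: set $G^{(1)}=G$, $k=1$. If $G^{(k)}$ is a clique, give all its vertices rank $k$ and stop. Else if $G^{(k)}$ has no strict corners, give all its vertices rank $\infty$ and stop. Else give every strict corner of $G^{(k)}$ rank $k$, delete them to get $G^{(k+1)}$ (induced subgraph), increase $k$ and repeat. The corner rank is the largest rank of a vertex; $X_k$ is the set of rank-$k$ vertices. A graph of finite corner rank $\alpha\ge2$ is of type 1 if some (equivalently every) vertex of rank $\alpha$ dominates $V(G^{(\alpha-1)})$, and of type 0 otherwise. Cops and robbers: a cop chooses a vertex, then the robber; they alternate moves, cop first, moving to an adjacent vertex or staying; the cop wins upon occupying the robber's vertex. $G$ is cop-win if the cop can force a win; its capture time is the minimum number of cop moves (not counting initial placement) that guarantees capture. (Known: $G$ is cop-win iff its corner rank is finite, and a type-$r$ graph of corner rank $\alpha$ has capture time $\alpha-r$.) The rank cardinality vector of $G$ is $(x_\alpha,\dots,x_1)$ with $x_k=|X_k|$; $G$ realizes it. $H_7$ is the graph on $a_1,a_2,b_1,b_2,c_1,c_2,d$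 with edges $a_1a_2,a_1b_1,a_1b_2,a_2b_1,a_2b_2,a_2c_1,a_1c_2,b_1c_1,b_1c_2,b_1d,b_2c_1,b_2c_2,c_1d,c_2d$. For $k\ge0$, $\mathcal{H}_7^{+k}$ is the set of cop-win graphs realizing the vector $(2,2,2,1,\dots,1)$ of length $4+k$, and $\mathcal{H}_7^+=\bigcup_{k\ge0}\mathcal{H}_7^{+k}$. *)

theory Defs
  imports Main
begin

text \<open>A (finite, nonempty, reflexive, undirected) graph is given by a vertex set V
  and an adjacency relation E, which is only relevant on V.\<close>

definition graph :: "'a set \<Rightarrow> ('a \<Rightarrow> 'a \<Rightarrow> bool) \<Rightarrow> bool" where
  "graph V E \<longleftrightarrow> finite V \<and> V \<noteq> {} \<and> (\<forall>x\<in>V. E x x)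
     \<and> (\<forall>x\<in>V. \<forall>y\<in>V. E x y \<longleftrightarrow> E y x)"

definition nbh :: "('a \<Rightarrow> 'a \<Rightarrow> bool) \<Rightarrow> 'a set \<Rightarrow> 'a \<Rightarrow> 'a set" where
  "nbh E S v = {w \<in> S. E v w}"

definition strict_corners :: "('a \<Rightarrow> 'a \<Rightarrow> bool) \<Rightarrow> 'a set \<Rightarrow> 'a set" where
  "strict_corners E S = {v \<in> S. \<exists>w\<in>S. w \<noteq> v \<and> nbh E S v \<subset> nbh E S w}"

definition is_clique :: "('a \<Rightarrow> 'a \<Rightarrow> bool) \<Rightarrow> 'a set \<Rightarrow> bool" where
  "is_clique E S \<longleftrightarrow> (\<forall>x\<in>S. \<forall>y\<in>S. E x y)"

text \<open>Vertex set of G^(k), for k \<ge> 1 (G^(1) = G; each step deletes all strict corners).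
  Once a clique or a graph without strict corners is reached, the set stays constant.\<close>
definition Gk :: "'a set \<Rightarrow> ('a \<Rightarrow> 'a \<Rightarrow> bool) \<Rightarrow> nat \<Rightarrow> 'a set" where
  "Gk V E k = ((\<lambda>S. S - strict_corners E S) ^^ (k - 1)) V"

definition finite_corner_rank :: "'a set \<Rightarrow> ('a \<Rightarrow> 'a \<Rightarrow> bool) \<Rightarrow> bool" where
  "finite_corner_rank V E \<longleftrightarrow> (\<exists>k\<ge>1. is_clique E (Gk V E k))"

text \<open>Corner rank (meaningful when finite): the stage at which a clique is reached.\<close>
definition corner_rank :: "'a set \<Rightarrow> ('a \<Rightarrow> 'a \<Rightarrow> bool) \<Rightarrow> nat" where
  "corner_rank V E = (LEAST k. k \<ge> 1 \<and> is_clique E (Gk V E k))"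

definition rank_set :: "'a set \<Rightarrow> ('a \<Rightarrow> 'a \<Rightarrow> bool) \<Rightarrow> nat \<Rightarrow> 'a set" where
  "rank_set V E k =
     (if 1 \<le> k \<and> k < corner_rank V E then Gk V E k - Gk V E (k + 1)
      else if k = corner_rank V E then Gk V E k else {})"

definition rank_vector :: "'a set \<Rightarrow> ('a \<Rightarrow> 'a \<Rightarrow> bool) \<Rightarrow> nat list" where
  "rank_vector V E = map (\<lambda>j. card (rank_set V E j)) (rev [1..<corner_rank V E + 1])"

definition realizes :: "'a set \<Rightarrow> ('a \<Rightarrow> 'a \<Rightarrow> bool) \<Rightarrow> nat list \<Rightarrow> bool" where
  "realizes V E xs \<longleftrightarrow> finite_corner_rank V E \<and> rank_vector V E = xs"

definition type1 :: "'a set \<Rightarrow> ('a \<Rightarrow> 'a \<Rightarrow> bool) \<Rightarrow> bool" where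
  "type1 V E \<longleftrightarrow> finite_corner_rank V E \<and> corner_rank V E \<ge> 2 \<and>
     (\<exists>v \<in> rank_set V E (corner_rank V E). \<forall>w \<in> Gk V E (corner_rank V E - 1). E v w)"

text \<open>Cops and robbers. cop_wins_in V E n c r: with the cop on c and the robber on r,
  cop to move, the cop can guarantee capture within n further cop moves.\<close>
fun cop_wins_in :: "'a set \<Rightarrow> ('a \<Rightarrow> 'a \<Rightarrow> bool) \<Rightarrow> nat \<Rightarrow> 'a \<Rightarrow> 'a \<Rightarrow> bool" where
  "cop_wins_in V E 0 c r \<longleftrightarrow> c = r"
| "cop_wins_in V E (Suc n) c r \<longleftrightarrow> c = r \<or>
     (\<exists>c'\<in>V. E c c' \<and> (c' = r \<or> (\<forall>r'\<in>V. E r r' \<longrightarrow> cop_wins_in V E n c' r')))"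

definition captures_in :: "'a set \<Rightarrow> ('a \<Rightarrow> 'a \<Rightarrow> bool) \<Rightarrow> nat \<Rightarrow> bool" where
  "captures_in V E n \<longleftrightarrow> (\<exists>c\<in>V. \<forall>r\<in>V. cop_wins_in V E n c r)"

definition cop_win :: "'a set \<Rightarrow> ('a \<Rightarrow> 'a \<Rightarrow> bool) \<Rightarrow> bool" where
  "cop_win V E \<longleftrightarrow> (\<exists>n. captures_in V E n)"

definition capture_time :: "'a set \<Rightarrow> ('a \<Rightarrow> 'a \<Rightarrow> bool) \<Rightarrow> nat" where
  "capture_time V E = (LEAST n. captures_in V E n)"

definition in_H7_plus :: "'a set \<Rightarrow> ('a \<Rightarrow> 'a \<Rightarrow> bool) \<Rightarrow> bool" where
  "in_H7_plus V E \<longleftrightarrow> cop_win V E \<and>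
     (\<exists>k::nat. realizes V E ([2, 2, 2] @ replicate (k + 1) 1))"

datatype h7 = A1 | A2 | B1 | B2 | C1 | C2 | D

definition h7_edges :: "(h7 \<times> h7) set" where
  "h7_edges = {(A1,A2),(A1,B1),(A1,B2),(A2,B1),(A2,B2),(A2,C1),(A1,C2),(B1,C1),(B1,C2),
               (B1,D),(B2,C1),(B2,C2),(C1,D),(C2,D)}"

definition h7_adj :: "h7 \<Rightarrow> h7 \<Rightarrow> bool" where
  "h7_adj x y \<longleftrightarrow> x = y \<or> (x, y) \<in> h7_edges \<or> (y, x) \<in> h7_edges"

definition iso_H7 :: "('a \<Rightarrow> 'a \<Rightarrow> bool) \<Rightarrow> 'a set \<Rightarrow> bool" where
  "iso_H7 E S \<longleftrightarrow> (\<exists>f. bij_betw f S (UNIV :: h7 set) \<and>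
     (\<forall>x\<in>S. \<forall>y\<in>S. E x y \<longleftrightarrow> h7_adj (f x) (f y)))"

end

theory Submission
  imports Defs
begin

(*
  The rank vector (2,2,2,1,...,1) says that the last three deletion steps of the corner ranking
  remove two vertices each and leave a 2-clique, and that every earlier step removes a single
  vertex.  Which of the seven vertices of G^(alpha-3) are strict corners at each of the three last
  stages pins down its edges: it is H7.  There a vertex of rank alpha dominates G^(alpha-1), so G
  has type 1, and |V| = alpha + 3.

  Upper bound: a dominating retraction of G^(k) onto G^(k+1) lets a cop who wins on G^(k+1) win
  on G^(k) one move later, by chasing the robber's image; hence alpha - 1 moves suffice.
  Lower bound: H7 has no twins, and since each earlier step deletes just one strict corner,
  no G^(k) with k <= alpha - 3 has twins.  So a robber on G^(j+1) who is not adjacent to the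
  image of the cop under the composed retractions can always step to a vertex of G^(j) that the
  cop's next image does not see; as no vertex of G^(alpha-2) dominates it, the robber survives
  alpha - 2 moves.
*)

section \<open>The corner ranking\<close>

lemma Gk_one [simp]: "Gk V E (Suc 0) = V"
  by (simp add: Gk_def)

lemma Gk_Suc: "1 \<le> k \<Longrightarrow> Gk V E (Suc k) = Gk V E k - strict_corners E (Gk V E k)"
  by (cases k) (simp_all add: Gk_def)

lemma Gk_Suc_subset: "Gk V E (Suc k) \<subseteq> Gk V E k"
  by (cases k) (auto simp: Gk_Suc, simp add: Gk_def)

lemma Gk_antimono: "j \<le> k \<Longrightarrow> Gk V E k \<subseteq> Gk V E j"
  using lift_Suc_antimono_le[of "Gk V E", OF Gk_Suc_subset] by blast

lemma Gk_subset: "Gk V E k \<subseteq> V"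
  using Gk_antimono[of 0 k V E] by (simp add: Gk_def)

lemma finite_Gk: "finite V \<Longrightarrow> finite (Gk V E k)"
  by (rule finite_subset[OF Gk_subset])

lemma strict_corners_subset: "strict_corners E S \<subseteq> S"
  unfolding strict_corners_def by blast

lemma strict_corners_iff:
  "v \<in> strict_corners E S \<longleftrightarrow>
     v \<in> S \<and> (\<exists>w\<in>S. w \<noteq> v \<and> (\<forall>z\<in>S. E v z \<longrightarrow> E w z) \<and> (\<exists>z\<in>S. E w z \<and> \<not> E v z))"
  unfolding strict_corners_def nbh_def by blast

lemma strict_corners_Gk: "1 \<le> k \<Longrightarrow> strict_corners E (Gk V E k) = Gk V E k - Gk V E (Suc k)"
  using Gk_Suc[of k V E] strict_corners_subset[of E "Gk V E k"] by blast

lemma nbh_mono_set: "T \<subseteq> S \<Longrightarrow> nbh E T v = nbh E S v \<inter> T"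
  unfolding nbh_def by blast

lemma graph_subset: "graph V E \<Longrightarrow> S \<subseteq> V \<Longrightarrow> S \<noteq> {} \<Longrightarrow> graph S E"
  unfolding graph_def by (auto intro: finite_subset)

lemma dominated_by_non_corner:
  assumes "finite S" "v \<in> S"
  shows "\<exists>w\<in>S - strict_corners E S. nbh E S v \<subseteq> nbh E S w"
proof -
  let ?M = "{u\<in>S. nbh E S v \<subseteq> nbh E S u}"
  have "finite (nbh E S ` ?M)" "nbh E S ` ?M \<noteq> {}"
    using assms by auto
  then obtain u where u: "u \<in> ?M"
    and max: "\<forall>N\<in>nbh E S ` ?M. nbh E S u \<subseteq> N \<longrightarrow> nbh E S u = N"
    using finite_has_maximal[of "nbh E S ` ?M"] by blast
  have "u \<notin> strict_corners E S"
  proof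
    assume "u \<in> strict_corners E S"
    then obtain w where "w \<in> S" "nbh E S u \<subset> nbh E S w"
      unfolding strict_corners_def by blast
    with u max show False by blast
  qed
  then show ?thesis using u by blast
qed

lemma Gk_nonempty: "graph V E \<Longrightarrow> Gk V E k \<noteq> {}"
proof (induction k)
  case 0
  then show ?case by (simp add: Gk_def graph_def)
next
  case (Suc k)
  show ?case
  proof (cases "k = 0")
    case True
    then show ?thesis using Suc.prems by (simp add: graph_def)
  next
    case False
    have "Gk V E k \<noteq> {}" using Suc by blast
    then obtain v where "v \<in> Gk V E k" by blast
    moreover have "finite (Gk V E k)" using Suc.prems by (simp add: graph_def finite_Gk)
    ultimately obtain w where "w \<in> Gk V E k - strict_corners E (Gk V E k)"
      using dominated_by_non_corner[of "Gk V E k" v E] by blast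
    moreover have "Gk V E (Suc k) = Gk V E k - strict_corners E (Gk V E k)"
      using Gk_Suc[of k V E] False by simp
    ultimately show ?thesis by blast
  qed
qed

lemma graph_Gk: "graph V E \<Longrightarrow> graph (Gk V E k) E"
  using graph_subset[OF _ Gk_subset Gk_nonempty] .

lemma card_Gk_descend:
  assumes "finite V" "i \<le> k" "\<And>m. i \<le> m \<Longrightarrow> m < k \<Longrightarrow> card (Gk V E m - Gk V E (Suc m)) = 1"
  shows "card (Gk V E i) = card (Gk V E k) + (k - i)"
  using assms(2,3)
proof (induction i rule: inc_induct)
  case (step m)
  have "card (Gk V E m - Gk V E (Suc m)) = card (Gk V E m) - card (Gk V E (Suc m))"
    using card_Diff_subset[OF finite_Gk[OF assms(1)] Gk_Suc_subset] .
  moreover have "card (Gk V E (Suc m)) \<le> card (Gk V E m)"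
    using card_mono[OF finite_Gk[OF assms(1)] Gk_Suc_subset] .
  ultimately show ?case using step by fastforce
qed simp

lemma realizes_rank_layers:
  assumes "realizes V E xs"
  shows realizes_corner_rank: "corner_rank V E = length xs"
    and realizes_clique: "is_clique E (Gk V E (length xs))"
    and realizes_card_top: "xs \<noteq> [] \<Longrightarrow> card (Gk V E (length xs)) = xs ! 0"
    and realizes_card_layer:
      "1 \<le> k \<Longrightarrow> k < length xs \<Longrightarrow> card (Gk V E k - Gk V E (Suc k)) = xs ! (length xs - k)"
proof -
  have vec: "rank_vector V E = xs" and fin: "finite_corner_rank V E"
    using assms unfolding realizes_def by auto
  show \<alpha>: "corner_rank V E = length xs"
    using vec unfolding rank_vector_def by auto
  have "\<exists>k\<ge>1. is_clique E (Gk V E k)" using fin unfolding finite_corner_rank_def .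
  then have "is_clique E (Gk V E (corner_rank V E))"
    unfolding corner_rank_def by (rule LeastI2_ex) auto
  then show "is_clique E (Gk V E (length xs))" using \<alpha> by simp
  have nth: "card (rank_set V E (length xs - i)) = xs ! i" if "i < length xs" for i
  proof -
    have "rev [1..<corner_rank V E + 1] ! i = length xs - i"
      using that \<alpha> rev_nth[of i "[1..<corner_rank V E + 1]"] nth_upt[of 1 "length xs - Suc i"]
      by (simp del: upt_Suc)
    then have "rank_vector V E ! i = card (rank_set V E (length xs - i))"
      using that \<alpha> unfolding rank_vector_def by (simp del: upt_Suc)
    then show ?thesis using vec by simp
  qed
  show "xs \<noteq> [] \<Longrightarrow> card (Gk V E (length xs)) = xs ! 0"
    using nth[of 0] \<alpha> unfolding rank_set_def by simp
  show "card (Gk V E k - Gk V E (Suc k)) = xs ! (length xs - k)" if "1 \<le> k" "k < length xs"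
    using nth[of "length xs - k"] that \<alpha> unfolding rank_set_def by simp
qed

section \<open>Dominating retractions and the cop\<close>

definition dominating_retraction :: "('a \<Rightarrow> 'a \<Rightarrow> bool) \<Rightarrow> 'a set \<Rightarrow> 'a set \<Rightarrow> ('a \<Rightarrow> 'a) \<Rightarrow> bool" where
  "dominating_retraction E S T g \<longleftrightarrow>
     (\<forall>v\<in>S. g v \<in> T \<and> nbh E S v \<subseteq> nbh E S (g v)) \<and> (\<forall>v\<in>T. g v = v)"

lemma dominating_retraction_exists:
  assumes "finite S"
  shows "\<exists>g. dominating_retraction E S (S - strict_corners E S) g"
proof -
  have "\<forall>v. \<exists>w. v \<in> S \<longrightarrow> w \<in> S - strict_corners E S \<and> nbh E S v \<subseteq> nbh E S w
                 \<and> (v \<notin> strict_corners E S \<longrightarrow> w = v)"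
    using dominated_by_non_corner[OF assms] by blast
  then obtain g where "\<forall>v\<in>S. g v \<in> S - strict_corners E S \<and> nbh E S v \<subseteq> nbh E S (g v)
                 \<and> (v \<notin> strict_corners E S \<longrightarrow> g v = v)"
    by metis
  then show ?thesis unfolding dominating_retraction_def by blast
qed

lemma Gk_retractions_exist:
  assumes "finite V"
  shows "\<exists>g. \<forall>k\<ge>1. dominating_retraction E (Gk V E k) (Gk V E (Suc k)) (g k)"
proof -
  have "\<forall>k. \<exists>h. 1 \<le> k \<longrightarrow> dominating_retraction E (Gk V E k) (Gk V E (Suc k)) h"
    using dominating_retraction_exists[OF finite_Gk[OF assms]] Gk_Suc by metis
  then show ?thesis by metis
qed

lemma dominating_retraction_adj:
  assumes "dominating_retraction E S T g" "v \<in> S" "z \<in> S" "E v z"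
  shows "E (g v) z"
  using assms unfolding dominating_retraction_def nbh_def by blast

lemma dominating_retraction_hom:
  assumes "graph S E" "T \<subseteq> S" "dominating_retraction E S T g" "a \<in> S" "b \<in> S" "E a b"
  shows "E (g a) (g b)"
proof -
  have "g a \<in> S" "g b \<in> S" using assms(2-5) unfolding dominating_retraction_def by blast+
  moreover have "E b (g a)"
    using dominating_retraction_adj[OF assms(3-6)] assms(1,4,5) \<open>g a \<in> S\<close> unfolding graph_def by blast
  ultimately show ?thesis
    using dominating_retraction_adj[OF assms(3,5) \<open>g a \<in> S\<close>] assms(1) unfolding graph_def by blast
qed

lemma cop_wins_in_Suc: "cop_wins_in V E t c r \<Longrightarrow> cop_wins_in V E (Suc t) c r"
proof (induction t arbitrary: c r)
  case (Suc t)
  then show ?case by (simp only: cop_wins_in.simps(2)) (use Suc.IH in blast)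
qed simp

lemma captures_in_mono:
  assumes "captures_in V E t" "t \<le> t'"
  shows "captures_in V E t'"
  using assms(2)
proof (induction rule: dec_induct)
  case (step m)
  then show ?case unfolding captures_in_def using cop_wins_in_Suc by fast
qed (fact assms(1))

lemma cop_wins_in_adj: "c' \<in> V \<Longrightarrow> E c c' \<Longrightarrow> cop_wins_in V E (Suc t) c c'"
  by auto

(* The cop plays in T against the robber's image under g; catching the image means being
   adjacent to the robber. *)
lemma cop_wins_in_retract:
  assumes "graph S E" "T \<subseteq> S" "dominating_retraction E S T g"
    and "c \<in> T" "r \<in> S" "cop_wins_in T E t c (g r)"
  shows "cop_wins_in S E (Suc t) c r"
  using assms(4-6)
proof (induction t arbitrary: c r)
  have gT: "g v \<in> T" if "v \<in> S" for v
    using assms(3) that unfolding dominating_retraction_def by blast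
  have catch: "cop_wins_in S E (Suc t) (g r) r" if "r \<in> S" for r t
    using cop_wins_in_adj[OF that] dominating_retraction_adj[OF assms(3) that that] assms(1) that
    unfolding graph_def by blast
  {
    case 0
    then show ?case using catch[OF \<open>r \<in> S\<close>, of 0] by simp
  next
    case (Suc t)
    show ?case
    proof (cases "c = g r")
      case True
      show ?thesis unfolding True by (rule catch[OF Suc.prems(2)])
    next
      case False
      then obtain c' where c': "c' \<in> T" "E c c'"
        and next_move: "c' = g r \<or> (\<forall>r'\<in>T. E (g r) r' \<longrightarrow> cop_wins_in T E t c' r')"
        using Suc.prems(3) by auto
      have "cop_wins_in S E (Suc t) c' r'" if "r' \<in> S" "E r r'" for r'
      proof (cases "c' = g r")
        case True
        then show ?thesis
          using cop_wins_in_adj[OF that(1)] dominating_retraction_adj[OF assms(3) Suc.prems(2) that]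
          by blast
      next
        case False
        then have "cop_wins_in T E t c' (g r')"
          using next_move gT[OF that(1)]
            dominating_retraction_hom[OF assms(1-3) Suc.prems(2) that] by blast
        then show ?thesis using Suc.IH c'(1) that(1) by blast
      qed
      then show ?thesis
        using c' assms(2) unfolding cop_wins_in.simps(2)[of S E "Suc t"] by blast
    qed
  }
qed

lemma captures_in_retract:
  assumes "graph S E" "T \<subseteq> S" "dominating_retraction E S T g" "captures_in T E t"
  shows "captures_in S E (Suc t)"
proof -
  obtain c where c: "c \<in> T" "\<forall>r\<in>T. cop_wins_in T E t c r"
    using assms(4) unfolding captures_in_def by blast
  have "cop_wins_in S E (Suc t) c r" if "r \<in> S" for r
  proof (rule cop_wins_in_retract[OF assms(1-3) c(1) that])
    show "cop_wins_in T E t c (g r)"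
      using c(2) assms(3) that unfolding dominating_retraction_def by blast
  qed
  then show ?thesis using c(1) assms(2) unfolding captures_in_def by blast
qed

lemma captures_in_from_Gk:
  assumes "graph V E" "captures_in (Gk V E (Suc j)) E t"
  shows "captures_in V E (t + j)"
  using assms(2)
proof (induction j arbitrary: t)
  case (Suc j)
  let ?S = "Gk V E (Suc j)"
  have "finite ?S" using assms(1) finite_Gk unfolding graph_def by blast
  then obtain g where g: "dominating_retraction E ?S (?S - strict_corners E ?S) g"
    using dominating_retraction_exists by blast
  have "Gk V E (Suc (Suc j)) = ?S - strict_corners E ?S" by (simp add: Gk_Suc)
  then have "captures_in ?S E (Suc t)"
    using captures_in_retract[OF graph_Gk[OF assms(1)] _ g] Suc.prems by simp
  then show ?case using Suc.IH[of "Suc t"] by simp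
qed simp

lemma captures_in_dominating:
  assumes "graph V E" "v \<in> Gk V E (Suc j)" "\<forall>w\<in>Gk V E (Suc j). E v w"
  shows "captures_in V E (Suc j)"
proof -
  have "cop_wins_in (Gk V E (Suc j)) E (Suc 0) v w" if "w \<in> Gk V E (Suc j)" for w
    using cop_wins_in_adj[OF that] assms(3) that by blast
  then have "captures_in (Gk V E (Suc j)) E (Suc 0)"
    using assms(2) unfolding captures_in_def by blast
  then show ?thesis using captures_in_from_Gk[OF assms(1)] by (metis plus_1_eq_Suc One_nat_def)
qed

lemma capture_time_eqI:
  assumes "captures_in V E (Suc t)" "\<not> captures_in V E t"
  shows "capture_time V E = Suc t"
  unfolding capture_time_def
proof (rule Least_equality)
  show "Suc t \<le> t'" if "captures_in V E t'" for t'
    using captures_in_mono[OF that, of t] assms(2) by (cases "t' \<le> t") auto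
qed (fact assms(1))

section \<open>Twin-free layers and the robber\<close>

definition twin_free :: "('a \<Rightarrow> 'a \<Rightarrow> bool) \<Rightarrow> 'a set \<Rightarrow> bool" where
  "twin_free E S \<longleftrightarrow> (\<forall>x\<in>S. \<forall>y\<in>S. nbh E S x = nbh E S y \<longrightarrow> x = y)"

lemma strict_corner_twin:
  assumes "x \<in> strict_corners E S" "y \<in> S" "x \<noteq> y" "nbh E S x = nbh E S y"
  shows "y \<in> strict_corners E S"
proof -
  obtain w where "w \<in> S" "w \<noteq> x" "nbh E S x \<subset> nbh E S w"
    using assms(1) unfolding strict_corners_def by blast
  moreover have "w \<noteq> y" using calculation(3) assms(4) by blast
  ultimately show ?thesis using assms(2,4) unfolding strict_corners_def by auto
qed

lemma twin_free_if_one_corner: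
  assumes "finite S" "card (strict_corners E S) \<le> 1" "twin_free E (S - strict_corners E S)"
  shows "twin_free E S"
  unfolding twin_free_def
proof (intro ballI impI)
  fix x y assume xy: "x \<in> S" "y \<in> S" "nbh E S x = nbh E S y"
  show "x = y"
  proof (rule ccontr)
    assume ne: "x \<noteq> y"
    have "x \<in> strict_corners E S \<longleftrightarrow> y \<in> strict_corners E S"
      using strict_corner_twin[of x E S y] strict_corner_twin[of y E S x] xy ne by metis
    moreover have "\<not> (x \<in> strict_corners E S \<and> y \<in> strict_corners E S)"
      using assms(2) ne card_le_Suc0_iff_eq[of "strict_corners E S"]
        finite_subset[OF strict_corners_subset assms(1)] by auto
    moreover have "nbh E (S - strict_corners E S) x = nbh E (S - strict_corners E S) y"
      using xy(3) nbh_mono_set[of "S - strict_corners E S" S E] by blast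
    ultimately show False using assms(3) xy(1,2) ne unfolding twin_free_def by blast
  qed
qed

lemma twin_free_Gk_descend:
  assumes "finite V" "twin_free E (Gk V E k)" "1 \<le> i" "i \<le> k"
    and "\<And>m. i \<le> m \<Longrightarrow> m < k \<Longrightarrow> card (Gk V E m - Gk V E (Suc m)) \<le> 1"
  shows "twin_free E (Gk V E i)"
  using assms(4,5,3)
proof (induction i rule: inc_induct)
  case (step m)
  have "card (strict_corners E (Gk V E m)) \<le> 1"
    using step.hyps(2) step.prems strict_corners_Gk[where k=m and V=V and E=E] by simp
  moreover have "twin_free E (Gk V E m - strict_corners E (Gk V E m))"
    using step Gk_Suc[of m V E] by simp
  ultimately show ?case using twin_free_if_one_corner[OF finite_Gk[OF assms(1)]] by blast
qed (use assms(2) in simp)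

lemma non_corner_escapes:
  assumes "twin_free E S" "x \<in> S - strict_corners E S" "t \<in> S" "t \<noteq> x"
  shows "\<exists>x'\<in>S. E x x' \<and> \<not> E t x'"
proof (rule ccontr)
  assume "\<not> ?thesis"
  then have "nbh E S x \<subseteq> nbh E S t" unfolding nbh_def by blast
  moreover have "nbh E S x \<noteq> nbh E S t" using assms unfolding twin_free_def by blast
  ultimately have "x \<in> strict_corners E S"
    using assms(2-4) unfolding strict_corners_def by blast
  then show False using assms(2) by blast
qed

(* With g k retracting G^(k) onto G^(k+1), shadow g j maps V onto G^(j+1): it is the image of
   the cop that the robber plays against. *)
primrec shadow :: "(nat \<Rightarrow> 'a \<Rightarrow> 'a) \<Rightarrow> nat \<Rightarrow> 'a \<Rightarrow> 'a" where
  "shadow g 0 x = x"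
| "shadow g (Suc j) x = g (Suc j) (shadow g j x)"

context
  fixes V :: "'a set" and E :: "'a \<Rightarrow> 'a \<Rightarrow> bool" and g :: "nat \<Rightarrow> 'a \<Rightarrow> 'a"
  assumes graph: "graph V E"
    and retraction: "\<And>k. 1 \<le> k \<Longrightarrow> dominating_retraction E (Gk V E k) (Gk V E (Suc k)) (g k)"
begin

lemma shadow_in_Gk: "x \<in> V \<Longrightarrow> shadow g j x \<in> Gk V E (Suc j)"
proof (induction j)
  case (Suc j)
  then show ?case using retraction[of "Suc j"] unfolding dominating_retraction_def by simp
qed simp

lemma shadow_fixed: "x \<in> Gk V E (Suc j) \<Longrightarrow> shadow g j x = x"
proof (induction j)
  case (Suc j)
  then show ?case
    using retraction[of "Suc j"] Gk_Suc_subset[of V E "Suc j"] unfolding dominating_retraction_def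
    by auto
qed simp

lemma shadow_adj: "x \<in> V \<Longrightarrow> y \<in> V \<Longrightarrow> E x y \<Longrightarrow> E (shadow g j x) (shadow g j y)"
proof (induction j)
  case (Suc j)
  then show ?case
    using dominating_retraction_hom[OF graph_Gk[OF graph] Gk_Suc_subset retraction[of "Suc j"]]
      shadow_in_Gk by simp
qed simp

lemma robber_evades:
  assumes "\<forall>k\<in>{1..j}. twin_free E (Gk V E k)" "x \<in> Gk V E (Suc j)" "y \<in> V"
    and "\<not> E (shadow g j y) x"
  shows "\<not> cop_wins_in V E (Suc j) y x"
  using assms
proof (induction j arbitrary: x y)
  case 0
  then have "x \<in> V" "E x x" "\<not> E y x" using graph unfolding graph_def by auto
  then show ?case by auto
next
  case (Suc j)
  have x: "x \<in> Gk V E (Suc j) - strict_corners E (Gk V E (Suc j))"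
    using Suc.prems(2) Gk_Suc[of "Suc j" V E] by simp
  have xV: "x \<in> V" using x Gk_subset[of V E "Suc j"] by blast
  have x_fixed: "shadow g (Suc j) x = x" using shadow_fixed[OF Suc.prems(2)] .
  moreover have "E x x" using graph xV unfolding graph_def by blast
  ultimately have "y \<noteq> x" using Suc.prems(4) by auto
  moreover have "c' \<noteq> x \<and> (\<exists>x'\<in>V. E x x' \<and> \<not> cop_wins_in V E (Suc j) c' x')"
    if c': "c' \<in> V" "E y c'" for c'
  proof -
    define t where "t = shadow g j c'"
    have shadow_c': "shadow g (Suc j) c' \<noteq> x"
      using shadow_adj[OF Suc.prems(3) c', of "Suc j"] Suc.prems(4) by auto
    then have c'_x: "c' \<noteq> x" using x_fixed by blast
    have "g (Suc j) x = x"
      using retraction[of "Suc j"] Suc.prems(2) unfolding dominating_retraction_def by simp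
    then have "t \<noteq> x" using shadow_c' unfolding t_def by auto
    moreover have "t \<in> Gk V E (Suc j)" using shadow_in_Gk[OF c'(1)] unfolding t_def .
    moreover have "twin_free E (Gk V E (Suc j))" using Suc.prems(1) by simp
    ultimately obtain x' where x': "x' \<in> Gk V E (Suc j)" "E x x'" "\<not> E t x'"
      using non_corner_escapes[OF _ x] by blast
    then have "\<not> cop_wins_in V E (Suc j) c' x'"
      using Suc.IH[of x' c'] Suc.prems(1) c'(1) unfolding t_def by simp
    then show ?thesis using c'_x x' Gk_subset[of V E "Suc j"] by blast
  qed
  ultimately show ?case
    unfolding cop_wins_in.simps(2)[of V E "Suc j"] by blast
qed

end

lemma not_captures_in:
  assumes "graph V E" "\<forall>k\<in>{1..j}. twin_free E (Gk V E k)"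
    and "\<forall>y\<in>Gk V E (Suc j). \<exists>x\<in>Gk V E (Suc j). \<not> E y x"
  shows "\<not> captures_in V E (Suc j)"
proof
  assume "captures_in V E (Suc j)"
  then obtain c where c: "c \<in> V" "\<forall>r\<in>V. cop_wins_in V E (Suc j) c r"
    unfolding captures_in_def by blast
  have "finite V" using assms(1) unfolding graph_def by blast
  then obtain g where "\<forall>k\<ge>1. dominating_retraction E (Gk V E k) (Gk V E (Suc k)) (g k)"
    using Gk_retractions_exist by blast
  then have g: "\<And>k. 1 \<le> k \<Longrightarrow> dominating_retraction E (Gk V E k) (Gk V E (Suc k)) (g k)"
    by blast
  obtain x where x: "x \<in> Gk V E (Suc j)" "\<not> E (shadow g j c) x"
    using assms(3) shadow_in_Gk[OF assms(1) g c(1)] by blast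
  then have "\<not> cop_wins_in V E (Suc j) c x"
    using robber_evades[OF assms(1) g assms(2) x(1) c(1)] by blast
  then show False using c(2) x(1) Gk_subset[of V E "Suc j"] by blast
qed

section \<open>The graph H7\<close>

lemma h7_all: "(\<forall>p. P p) \<longleftrightarrow> P A1 \<and> P A2 \<and> P B1 \<and> P B2 \<and> P C1 \<and> P C2 \<and> P D"
  by (metis h7.exhaust)

lemma UNIV_h7: "(UNIV :: h7 set) = {A1, A2, B1, B2, C1, C2, D}"
  using h7.exhaust by blast

lemma h7_adj_eq_imp_eq: "(\<forall>r. h7_adj p r = h7_adj q r) \<Longrightarrow> p = q"
  by (cases p; cases q) (simp_all add: h7_all h7_adj_def h7_edges_def)

context
  fixes E :: "'a \<Rightarrow> 'a \<Rightarrow> bool" and h :: "h7 \<Rightarrow> 'a"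
  assumes h_adj: "\<forall>p q. E (h p) (h q) = h7_adj p q"
begin

lemma inj_H7_embedding: "inj h"
proof (rule injI)
  fix p q assume "h p = h q"
  then show "p = q" using h_adj h7_adj_eq_imp_eq by metis
qed

lemma iso_H7_embedding: "iso_H7 E (range h)"
proof -
  have "bij_betw (inv h) (range h) UNIV"
    using inj_H7_embedding by (simp add: bij_betw_inv_into inj_on_imp_bij_betw)
  moreover have "E x y \<longleftrightarrow> h7_adj (inv h x) (inv h y)" if "x \<in> range h" "y \<in> range h" for x y
    using that h_adj inj_H7_embedding by (auto simp: inv_f_f)
  ultimately show ?thesis unfolding iso_H7_def by blast
qed

lemma twin_free_H7_embedding: "twin_free E (range h)"
  unfolding twin_free_def
proof (intro ballI impI)
  fix x y assume "x \<in> range h" "y \<in> range h" and nbh_eq: "nbh E (range h) x = nbh E (range h) y"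
  then obtain p q where "x = h p" "y = h q" by blast
  moreover have "h7_adj p r = h7_adj q r" for r
    using nbh_eq h_adj \<open>x = h p\<close> \<open>y = h q\<close> unfolding nbh_def by blast
  ultimately show "x = y" using h7_adj_eq_imp_eq by metis
qed

end

lemma H7_no_dominating_vertex:
  "\<forall>p\<in>{A1, A2, B1, B2, C1, C2}. \<exists>q\<in>{A1, A2, B1, B2, C1, C2}. \<not> h7_adj p q"
  by (simp add: h7_adj_def h7_edges_def)

lemma H7_adjacency_of_layers:
  assumes "graph {a1,a2,b1,b2,c1,c2,d} E" "distinct [a1,a2,b1,b2,c1,c2,d]" "E a1 a2"
    and sc3: "strict_corners E {a1,a2,b1,b2} = {b1,b2}"
    and sc2: "strict_corners E {a1,a2,b1,b2,c1,c2} = {c1,c2}"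
    and sc1: "strict_corners E {a1,a2,b1,b2,c1,c2,d} = {d}"
  shows "\<exists>h. h A1 = a1 \<and> h A2 = a2 \<and> {h B1, h B2} = {b1,b2} \<and> {h C1, h C2} = {c1,c2} \<and> h D = d
           \<and> (\<forall>p q. E (h p) (h q) = h7_adj p q)"
proof -
  let ?G = "{a1,a2,b1,b2,c1,c2,d}"
  have symG: "E x y = E y x" if "x \<in> ?G" "y \<in> ?G" for x y
    using assms(1) that unfolding graph_def by blast
  have reflG: "E x x" if "x \<in> ?G" for x
    using assms(1) that unfolding graph_def by blast
  have E_sym: "E a2 a1 = E a1 a2" "E b1 a1 = E a1 b1" "E b1 a2 = E a2 b1" "E b2 a1 = E a1 b2"
    "E b2 a2 = E a2 b2" "E b2 b1 = E b1 b2" "E c1 a1 = E a1 c1" "E c1 a2 = E a2 c1"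
    "E c1 b1 = E b1 c1" "E c1 b2 = E b2 c1" "E c2 a1 = E a1 c2" "E c2 a2 = E a2 c2"
    "E c2 b1 = E b1 c2" "E c2 b2 = E b2 c2" "E c2 c1 = E c1 c2" "E d a1 = E a1 d"
    "E d a2 = E a2 d" "E d b1 = E b1 d" "E d b2 = E b2 d" "E d c1 = E c1 d" "E d c2 = E c2 d"
    and E_refl: "E a1 a1" "E a2 a2" "E b1 b1" "E b2 b2" "E c1 c1" "E c2 c2" "E d d"
    by (rule symG reflG; simp)+
  have m3: "x \<in> strict_corners E {a1,a2,b1,b2} \<longleftrightarrow> x \<in> {b1,b2}" for x using sc3 by simp
  have m2: "x \<in> strict_corners E {a1,a2,b1,b2,c1,c2} \<longleftrightarrow> x \<in> {c1,c2}" for x using sc2 by simp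
  have m1: "x \<in> strict_corners E {a1,a2,b1,b2,c1,c2,d} \<longleftrightarrow> x \<in> {d}" for x using sc1 by simp
  note corner_status =
    m3[of a1, unfolded strict_corners_iff] m3[of a2, unfolded strict_corners_iff]
    m3[of b1, unfolded strict_corners_iff] m3[of b2, unfolded strict_corners_iff]
    m2[of a1, unfolded strict_corners_iff] m2[of a2, unfolded strict_corners_iff]
    m2[of b1, unfolded strict_corners_iff] m2[of b2, unfolded strict_corners_iff]
    m2[of c1, unfolded strict_corners_iff] m2[of c2, unfolded strict_corners_iff]
    m1[of a1, unfolded strict_corners_iff] m1[of a2, unfolded strict_corners_iff]
    m1[of b1, unfolded strict_corners_iff] m1[of b2, unfolded strict_corners_iff]
    m1[of c1, unfolded strict_corners_iff] m1[of c2, unfolded strict_corners_iff]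
    m1[of d, unfolded strict_corners_iff]
  \<comment> \<open>a finite check: these 17 facts fix all 21 possible edges, up to swapping b1, b2 and c1, c2\<close>
  have edges: "E a1 b1 \<and> E a1 b2 \<and> E a2 b1 \<and> E a2 b2 \<and> \<not> E b1 b2 \<and>
     E b1 c1 \<and> E b1 c2 \<and> E b2 c1 \<and> E b2 c2 \<and> \<not> E c1 c2 \<and>
     \<not> E a1 d \<and> \<not> E a2 d \<and> E c1 d \<and> E c2 d \<and>
     ((E a1 c2 \<and> E a2 c1 \<and> \<not> E a1 c1 \<and> \<not> E a2 c2) \<or> (E a1 c1 \<and> E a2 c2 \<and> \<not> E a1 c2 \<and> \<not> E a2 c1)) \<and>
     ((E b1 d \<and> \<not> E b2 d) \<or> (E b2 d \<and> \<not> E b1 d))"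
    using corner_status assms(2,3) by (simp add: E_sym E_refl) smt
  then consider
      "E a1 c2" "E b1 d" | "E a1 c1" "E b1 d" | "E a1 c2" "E b2 d" | "E a1 c1" "E b2 d"
    by blast
  then show ?thesis
  proof cases
    case 1
    show ?thesis
      by (rule exI[of _ "case_h7 a1 a2 b1 b2 c1 c2 d"])
        (use edges 1 assms(2,3) in \<open>simp add: h7_all h7_adj_def h7_edges_def E_sym E_refl\<close>)
  next
    case 2
    show ?thesis
      by (rule exI[of _ "case_h7 a1 a2 b1 b2 c2 c1 d"])
        (use edges 2 assms(2,3) in \<open>simp add: h7_all h7_adj_def h7_edges_def E_sym E_refl insert_commute\<close>)
  next
    case 3
    show ?thesis
      by (rule exI[of _ "case_h7 a1 a2 b2 b1 c1 c2 d"])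
        (use edges 3 assms(2,3) in \<open>simp add: h7_all h7_adj_def h7_edges_def E_sym E_refl insert_commute\<close>)
  next
    case 4
    show ?thesis
      by (rule exI[of _ "case_h7 a1 a2 b2 b1 c2 c1 d"])
        (use edges 4 assms(2,3) in \<open>simp add: h7_all h7_adj_def h7_edges_def E_sym E_refl insert_commute\<close>)
  qed
qed

lemma H7_of_rank_layers:
  assumes "graph G1 E" "is_clique E G4"
    and G2: "G2 = G1 - strict_corners E G1" and G3: "G3 = G2 - strict_corners E G2"
    and G4: "G4 = G3 - strict_corners E G3"
    and "card (G1 - G2) = 1" "card (G2 - G3) = 2" "card (G3 - G4) = 2" "card G4 = 2"
  shows "\<exists>h. range h = G1 \<and> h ` {A1, A2, B1, B2, C1, C2} = G2 \<and> h ` {A1, A2, B1, B2} = G3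
           \<and> h ` {A1, A2} = G4 \<and> (\<forall>p q. E (h p) (h q) = h7_adj p q)"
proof -
  obtain a1 a2 where a: "G4 = {a1, a2}" "a1 \<noteq> a2" using assms(9) unfolding card_2_iff by blast
  obtain b1 b2 where b: "G3 - G4 = {b1, b2}" "b1 \<noteq> b2" using assms(8) unfolding card_2_iff by blast
  obtain c1 c2 where c: "G2 - G3 = {c1, c2}" "c1 \<noteq> c2" using assms(7) unfolding card_2_iff by blast
  obtain d where d: "G1 - G2 = {d}" using assms(6) unfolding One_nat_def card_1_singleton_iff by blast
  have sc1: "strict_corners E G1 = G1 - G2" using G2 strict_corners_subset[of E G1] by blast
  have sc2: "strict_corners E G2 = G2 - G3" using G3 strict_corners_subset[of E G2] by blast
  have sc3: "strict_corners E G3 = G3 - G4" using G4 strict_corners_subset[of E G3] by blast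
  have G3': "G3 = {a1, a2, b1, b2}" using a(1) b(1) G4 by blast
  have G2': "G2 = {a1, a2, b1, b2, c1, c2}" using G3' c(1) G3 by blast
  have G1': "G1 = {a1, a2, b1, b2, c1, c2, d}" using G2' d(1) G2 by blast
  have "{b1, b2} \<inter> {a1, a2} = {}" using a(1) b(1) by blast
  moreover have "{c1, c2} \<inter> {a1, a2, b1, b2} = {}" using c(1) G3' by blast
  moreover have "d \<notin> {a1, a2, b1, b2, c1, c2}" using d(1) G2' by blast
  ultimately have "distinct [a1, a2, b1, b2, c1, c2, d]" using a(2) b(2) c(2) by auto
  moreover have "E a1 a2" using assms(2) a(1) unfolding is_clique_def by blast
  moreover have "strict_corners E {a1, a2, b1, b2} = {b1, b2}" using sc3 G3' b(1) by simp
  moreover have "strict_corners E {a1, a2, b1, b2, c1, c2} = {c1, c2}" using sc2 G2' c(1) by simp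
  moreover have "strict_corners E {a1, a2, b1, b2, c1, c2, d} = {d}" using sc1 G1' d(1) by simp
  moreover have "graph {a1, a2, b1, b2, c1, c2, d} E" using assms(1) G1' by simp
  ultimately obtain h where h: "h A1 = a1" "h A2 = a2" "{h B1, h B2} = {b1, b2}"
      "{h C1, h C2} = {c1, c2}" "h D = d" "\<forall>p q. E (h p) (h q) = h7_adj p q"
    using H7_adjacency_of_layers by metis
  have "h ` {A1, A2} = G4" using h(1,2) a(1) by simp
  moreover have "h ` {A1, A2, B1, B2} = G3" using h(1-3) G3' by auto
  moreover have "h ` {A1, A2, B1, B2, C1, C2} = G2" using h(1-4) G2' by auto
  moreover have "range h = G1" using h(1-5) G1' by (auto simp: UNIV_h7)
  ultimately show ?thesis using h(6) by blast
qed

lemma H7_plus_layers: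
  assumes "graph V E" "in_H7_plus V E"
  obtains n h where "corner_rank V E = n + 4" "\<forall>p q. E (h p) (h q) = h7_adj p q"
    "range h = Gk V E (n + 1)" "h ` {A1, A2, B1, B2, C1, C2} = Gk V E (n + 2)"
    "h ` {A1, A2, B1, B2} = Gk V E (n + 3)" "h ` {A1, A2} = Gk V E (n + 4)"
    "\<And>m. 1 \<le> m \<Longrightarrow> m \<le> n \<Longrightarrow> card (Gk V E m - Gk V E (Suc m)) = 1"
proof -
  obtain n where real: "realizes V E ([2, 2, 2] @ replicate (n + 1) 1)"
    using assms(2) unfolding in_H7_plus_def by blast
  have layer1: "card (Gk V E m - Gk V E (Suc m)) = 1" if "1 \<le> m" "m \<le> n + 1" for m
    using realizes_card_layer[OF real, of m] that by (simp add: nth_append nth_Cons')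
  have l1: "card (Gk V E (n + 1) - Gk V E (n + 2)) = 1" using layer1[of "n + 1"] by simp
  have l2: "card (Gk V E (n + 2) - Gk V E (n + 3)) = 2"
    using realizes_card_layer[OF real, of "n + 2"] by (simp add: numeral_eq_Suc)
  have l3: "card (Gk V E (n + 3) - Gk V E (n + 4)) = 2"
    using realizes_card_layer[OF real, of "n + 3"] by (simp add: numeral_eq_Suc)
  have l4: "card (Gk V E (n + 4)) = 2"
    using realizes_card_top[OF real] by (simp add: numeral_eq_Suc)
  have clique: "is_clique E (Gk V E (n + 4))"
    using realizes_clique[OF real] by (simp add: numeral_eq_Suc)
  have layers: "Gk V E (n + 2) = Gk V E (n + 1) - strict_corners E (Gk V E (n + 1))"
    "Gk V E (n + 3) = Gk V E (n + 2) - strict_corners E (Gk V E (n + 2))"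
    "Gk V E (n + 4) = Gk V E (n + 3) - strict_corners E (Gk V E (n + 3))"
    using Gk_Suc[of "n + 1" V E] Gk_Suc[of "n + 2" V E] Gk_Suc[of "n + 3" V E]
    by (simp_all add: numeral_eq_Suc)
  obtain h where "range h = Gk V E (n + 1)"
    "h ` {A1, A2, B1, B2, C1, C2} = Gk V E (n + 2)" "h ` {A1, A2, B1, B2} = Gk V E (n + 3)"
    "h ` {A1, A2} = Gk V E (n + 4)" "\<forall>p q. E (h p) (h q) = h7_adj p q"
    using H7_of_rank_layers[OF graph_Gk[OF assms(1)] clique layers l1 l2 l3 l4] by blast
  moreover have "corner_rank V E = n + 4" using realizes_corner_rank[OF real] by simp
  ultimately show ?thesis using that layer1 by simp
qed

theorem theorem4p2:
  fixes V :: "'a set" and E :: "'a \<Rightarrow> 'a \<Rightarrow> bool"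
  assumes "graph V E"
    and "in_H7_plus V E"
  shows "iso_H7 E (Gk V E (corner_rank V E - 3))
         \<and> type1 V E
         \<and> capture_time V E = card V - 4"
proof -
  obtain n h where \<alpha>: "corner_rank V E = n + 4" and h: "\<forall>p q. E (h p) (h q) = h7_adj p q"
    and G1: "range h = Gk V E (n + 1)" and G2: "h ` {A1, A2, B1, B2, C1, C2} = Gk V E (n + 2)"
    and G3: "h ` {A1, A2, B1, B2} = Gk V E (n + 3)" and G4: "h ` {A1, A2} = Gk V E (n + 4)"
    and layers: "\<And>m. 1 \<le> m \<Longrightarrow> m \<le> n \<Longrightarrow> card (Gk V E m - Gk V E (Suc m)) = 1"
    using H7_plus_layers[OF assms] by blast
  have fin: "finite V" using assms(1) unfolding graph_def by blast
  have dominating: "\<forall>w\<in>Gk V E (n + 3). E (h A1) w"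
    using G3[symmetric] h by (auto simp: h7_adj_def h7_edges_def)
  have "type1 V E"
    unfolding type1_def
  proof (intro conjI bexI)
    show "finite_corner_rank V E"
      using assms(2) unfolding in_H7_plus_def realizes_def by blast
    show "h A1 \<in> rank_set V E (corner_rank V E)" using G4 \<alpha> unfolding rank_set_def by auto
    show "2 \<le> corner_rank V E" using \<alpha> by simp
    show "\<forall>w\<in>Gk V E (corner_rank V E - 1). E (h A1) w"
      using dominating \<alpha> by (simp add: add.commute)
  qed
  moreover have "card V = n + 7"
    using card_Gk_descend[OF fin, of 1 "n + 1" E] layers G1
      card_image[OF inj_H7_embedding[of E h, OF h]]
    by (simp add: UNIV_h7)
  moreover have "captures_in V E (Suc (n + 2))"
    using captures_in_dominating[OF assms(1), of "h A1" "n + 2"] G3 dominating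
    unfolding add_Suc_right numeral_2_eq_2 numeral_3_eq_3 by auto
  moreover have "\<not> captures_in V E (Suc (n + 1))"
  proof (rule not_captures_in[OF assms(1)])
    show "\<forall>k\<in>{1..n + 1}. twin_free E (Gk V E k)"
      using twin_free_Gk_descend[OF fin] twin_free_H7_embedding[of E h, OF h] G1 layers by simp
    show "\<forall>y\<in>Gk V E (Suc (n + 1)). \<exists>x\<in>Gk V E (Suc (n + 1)). \<not> E y x"
      using H7_no_dominating_vertex G2[symmetric] h by auto
  qed
  ultimately show ?thesis
    using iso_H7_embedding[of E h, OF h] G1 \<alpha> capture_time_eqI[of V E "n + 2"] by simp
qed

end
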